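(* Let $\mathcal{X}$ be an input space, let predictors be functions $\theta:\mathcal{X}\to\mathbb{R}^K$, and let each input $x\in\mathcal{X}$ have label $y=y(x)$ given by a fixed labeling function common to all distributions considered. Let $L(\cdot,\cdot)$ be a loss function such that $L(v,y)$ is convex in its first argument $v\in\mathbb{R}^K$. For a probability density $Q$ on $\mathcal{X}$ and a predictor $\theta$, define the expected loss $\mathcal{L}(Q,\theta)=\int_x L(\theta(x),y)\,Q(x)\,dx$ (assumed finite for all predictors considered). Let $Q_S^1,\dots,Q_S^n$ be source densities on $\mathcal{X}$, and for each $1\le k\le n$ let $\theta_S^k=\arg\min_{\theta}\mathcal{L}(Q_S^k,\theta)$ be an optimal source predictor. Assume there exists $\lambda\in\mathbb{R}^n$ with $\lambda\ge 0$ and $\lambda^\top\mathbb{1}=1$ such that the target density satisfies $Q_T=\sum_{i=1}^n\lambda_iQ_S^i$. Define the target predictor (at points where $Q_T(x)>0$) $$\theta_T(x)=\sum_{k=1}^n\frac{\lambda_kQ_S^k(x)}{\sum_{j=1}^n\lambda_jQ_S^j(x)}\,\theta_S^k(x).$$ Then $$\mathcal{L}(Q_T,\theta_T)\le\min_{1\le j\le n}\mathcal{L}(Q_T,\theta_S^j).$$ Moreover, letting $\alpha=\arg\min_{1\le j\le n}\mathcal{L}(Q_T,\theta_S^j)$, this inequality is strict if all entries of $\lambda$ are strictly positive and there exists a source $i$ for which $\mathcal{L}(Q_S^i,\theta_S^i)<\mathcal{L}(Q_S^i,\theta_S^{\alpha})$.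
   Context: This is a model for multi-source domain adaptation: each of $n$ source domains has an input distribution with density $Q_S^k$ on $\mathcal{X}$, the target domain has density $Q_T$, and the supervised expected loss of a predictor $\theta$ under a density $Q$ is $\mathcal{L}(Q,\theta)=\int_x L(\theta(x),y)Q(x)\,dx$, where $y$ denotes the ground-truth label of $x$. *)

theory Defs
  imports "HOL-Analysis.Analysis"
begin

definition exp_loss ::
  "'a measure \<Rightarrow> (real^'k \<Rightarrow> 'b \<Rightarrow> real) \<Rightarrow> ('a \<Rightarrow> 'b) \<Rightarrow> ('a \<Rightarrow> real) \<Rightarrow> ('a \<Rightarrow> real^'k) \<Rightarrow> real"
  where "exp_loss M L y Q \<theta> = (\<integral>x. L (\<theta> x) (y x) * Q x \<partial>M)"

definition finite_loss ::
  "'a measure \<Rightarrow> (real^'k \<Rightarrow> 'b \<Rightarrow> real) \<Rightarrow> ('a \<Rightarrow> 'b) \<Rightarrow> ('a \<Rightarrow> real) \<Rightarrow> ('a \<Rightarrow> real^'k) \<Rightarrow> bool"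
  where "finite_loss M L y Q \<theta> = integrable M (\<lambda>x. L (\<theta> x) (y x) * Q x)"

definition prob_density :: "'a measure \<Rightarrow> ('a \<Rightarrow> real) \<Rightarrow> bool"
  where "prob_density M Q = (Q \<in> borel_measurable M \<and> (\<forall>x\<in>space M. 0 \<le> Q x)
                              \<and> integrable M Q \<and> (\<integral>x. Q x \<partial>M) = 1)"

definition optimal_predictor ::
  "'a measure \<Rightarrow> (real^'k \<Rightarrow> 'b \<Rightarrow> real) \<Rightarrow> ('a \<Rightarrow> 'b) \<Rightarrow> ('a \<Rightarrow> real) \<Rightarrow> ('a \<Rightarrow> real^'k) \<Rightarrow> bool"
  where "optimal_predictor M L y Q \<theta> =
     (finite_loss M L y Q \<theta> \<and>
      (\<forall>\<theta>'. finite_loss M L y Q \<theta>' \<longrightarrow> exp_loss M L y Q \<theta> \<le> exp_loss M L y Q \<theta>'))"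

end

theory Submission
  imports Defs
begin

text \<open>At each point x with Q_T(x) > 0, theta_T(x) is a convex combination of the
  theta_S^k(x) with weights lam_k Q_S^k(x) / Q_T(x), so Jensen's inequality gives
  L(theta_T x) Q_T(x) \<le> \<Sum>_k lam_k L(theta_S^k x) Q_S^k(x). Integrating,
  \<L>(Q_T, theta_T) \<le> \<Sum>_k lam_k \<L>(Q_S^k, theta_S^k) \<le> \<Sum>_k lam_k \<L>(Q_S^k, theta_S^j) = \<L>(Q_T, theta_S^j),
  by optimality of each theta_S^k and linearity of \<L> in the density. A strict
  inequality in one summand with positive weight makes the middle step strict.\<close>

lemma convex_on_normalized_sum_mult:
  fixes f :: "'v::real_vector \<Rightarrow> real"
  assumes f: "convex_on UNIV f" and I: "finite I"
    and a: "\<And>i. i \<in> I \<Longrightarrow> 0 \<le> a i"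
    and u: "0 < (\<Sum>i\<in>I. a i) \<Longrightarrow> u = (\<Sum>i\<in>I. (a i / (\<Sum>j\<in>I. a j)) *\<^sub>R v i)"
  shows "f u * (\<Sum>i\<in>I. a i) \<le> (\<Sum>i\<in>I. a i * f (v i))"
proof (cases "(\<Sum>i\<in>I. a i) = 0")
  case True
  then have "\<forall>i\<in>I. a i = 0"
    using sum_nonneg_eq_0_iff[OF I] a by blast
  then show ?thesis using True by simp
next
  case False
  define S where "S = (\<Sum>i\<in>I. a i)"
  have S: "0 < S" unfolding S_def using False a by (simp add: sum_nonneg order_less_le)
  have "I \<noteq> {}" using S unfolding S_def by auto
  moreover have "(\<Sum>i\<in>I. a i / S) = 1"
    using S by (simp add: S_def flip: sum_divide_distrib)
  ultimately have "f (\<Sum>i\<in>I. (a i / S) *\<^sub>R v i) \<le> (\<Sum>i\<in>I. a i / S * f (v i))"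
    using S a by (intro convex_on_sum[OF I _ f]) auto
  moreover have "u = (\<Sum>i\<in>I. (a i / S) *\<^sub>R v i)"
    using u S unfolding S_def by simp
  ultimately have "f u \<le> (\<Sum>i\<in>I. a i / S * f (v i))"
    by simp
  then have "f u * S \<le> (\<Sum>i\<in>I. a i / S * f (v i)) * S"
    using S by (simp add: mult_right_mono)
  also have "\<dots> = (\<Sum>i\<in>I. a i * f (v i))"
    using S by (simp add: sum_distrib_right)
  finally show ?thesis unfolding S_def .
qed

lemma exp_loss_mixture:
  assumes "\<And>i. i \<in> I \<Longrightarrow> finite_loss M L y (Q i) \<theta>"
  shows "exp_loss M L y (\<lambda>x. \<Sum>i\<in>I. c i * Q i x) \<theta> = (\<Sum>i\<in>I. c i * exp_loss M L y (Q i) \<theta>)"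
proof -
  have "exp_loss M L y (\<lambda>x. \<Sum>i\<in>I. c i * Q i x) \<theta>
      = (\<integral>x. (\<Sum>i\<in>I. c i * (L (\<theta> x) (y x) * Q i x)) \<partial>M)"
    unfolding exp_loss_def by (simp add: sum_distrib_left ac_simps)
  also have "\<dots> = (\<Sum>i\<in>I. c i * exp_loss M L y (Q i) \<theta>)"
    using assms unfolding exp_loss_def finite_loss_def by (simp add: integral_sum)
  finally show ?thesis .
qed

lemma exp_loss_mixture_predictor_le:
  assumes convex: "\<And>lab. convex_on UNIV (\<lambda>v. L v lab)" and I: "finite I"
    and nonneg: "\<And>i x. i \<in> I \<Longrightarrow> x \<in> space M \<Longrightarrow> 0 \<le> c i * Q i x"
    and QT: "\<And>x. QT x = (\<Sum>i\<in>I. c i * Q i x)"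
    and \<theta>T: "\<And>x. 0 < QT x \<Longrightarrow>
        \<theta>T x = (\<Sum>i\<in>I. (c i * Q i x / (\<Sum>j\<in>I. c j * Q j x)) *\<^sub>R \<theta> i x)"
    and fin: "\<And>i. i \<in> I \<Longrightarrow> finite_loss M L y (Q i) (\<theta> i)"
    and fin_T: "finite_loss M L y QT \<theta>T"
  shows "exp_loss M L y QT \<theta>T \<le> (\<Sum>i\<in>I. c i * exp_loss M L y (Q i) (\<theta> i))"
proof -
  have pointwise: "L (\<theta>T x) (y x) * QT x \<le> (\<Sum>i\<in>I. c i * (L (\<theta> i x) (y x) * Q i x))"
    if "x \<in> space M" for x
    using convex_on_normalized_sum_mult[OF convex I, of "\<lambda>i. c i * Q i x" "\<theta>T x" "\<lambda>i. \<theta> i x"]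
      nonneg[OF _ that] \<theta>T[unfolded QT]
    by (simp add: QT ac_simps)
  have "exp_loss M L y QT \<theta>T \<le> (\<integral>x. (\<Sum>i\<in>I. c i * (L (\<theta> i x) (y x) * Q i x)) \<partial>M)"
    using fin fin_T pointwise unfolding exp_loss_def finite_loss_def
    by (intro integral_mono) auto
  also have "\<dots> = (\<Sum>i\<in>I. c i * exp_loss M L y (Q i) (\<theta> i))"
    using fin unfolding exp_loss_def finite_loss_def by (simp add: integral_sum)
  finally show ?thesis .
qed

lemma sum_optimal_loss_le_mixture_loss:
  assumes c: "\<And>k. k \<in> I \<Longrightarrow> 0 \<le> c k"
    and opt: "\<And>k. k \<in> I \<Longrightarrow> optimal_predictor M L y (Q k) (\<theta> k)"
    and fin: "\<And>k. k \<in> I \<Longrightarrow> finite_loss M L y (Q k) \<theta>'"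
  shows "(\<Sum>k\<in>I. c k * exp_loss M L y (Q k) (\<theta> k))
    \<le> exp_loss M L y (\<lambda>x. \<Sum>k\<in>I. c k * Q k x) \<theta>'"
  using c opt fin unfolding optimal_predictor_def
  by (subst exp_loss_mixture) (auto intro!: sum_mono mult_left_mono)

lemma sum_optimal_loss_less_mixture_loss:
  assumes I: "finite I" and c: "\<And>k. k \<in> I \<Longrightarrow> 0 < c k"
    and opt: "\<And>k. k \<in> I \<Longrightarrow> optimal_predictor M L y (Q k) (\<theta> k)"
    and fin: "\<And>k. k \<in> I \<Longrightarrow> finite_loss M L y (Q k) \<theta>'"
    and strict: "\<exists>i\<in>I. exp_loss M L y (Q i) (\<theta> i) < exp_loss M L y (Q i) \<theta>'"
  shows "(\<Sum>k\<in>I. c k * exp_loss M L y (Q k) (\<theta> k))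
    < exp_loss M L y (\<lambda>x. \<Sum>k\<in>I. c k * Q k x) \<theta>'"
proof -
  have "(\<Sum>k\<in>I. c k * exp_loss M L y (Q k) (\<theta> k)) < (\<Sum>k\<in>I. c k * exp_loss M L y (Q k) \<theta>')"
  proof (rule sum_strict_mono_ex1[OF I])
    show "\<forall>k\<in>I. c k * exp_loss M L y (Q k) (\<theta> k) \<le> c k * exp_loss M L y (Q k) \<theta>'"
      using c opt fin unfolding optimal_predictor_def by (auto intro: mult_left_mono less_imp_le)
    show "\<exists>k\<in>I. c k * exp_loss M L y (Q k) (\<theta> k) < c k * exp_loss M L y (Q k) \<theta>'"
      using strict c by auto
  qed
  also have "\<dots> = exp_loss M L y (\<lambda>x. \<Sum>k\<in>I. c k * Q k x) \<theta>'"
    using fin by (simp add: exp_loss_mixture)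
  finally show ?thesis .
qed

theorem lemma1:
  fixes M :: "'a measure"
    and L :: "real^'k \<Rightarrow> 'b \<Rightarrow> real"
    and y :: "'a \<Rightarrow> 'b"
    and n :: nat
    and QS :: "nat \<Rightarrow> 'a \<Rightarrow> real"
    and QT :: "'a \<Rightarrow> real"
    and \<theta>S :: "nat \<Rightarrow> 'a \<Rightarrow> real^'k"
    and \<theta>T :: "'a \<Rightarrow> real^'k"
    and lam :: "nat \<Rightarrow> real"
  assumes convex: "\<And>lab. convex_on UNIV (\<lambda>v. L v lab)"
    and dens: "\<And>k. k \<in> {1..n} \<Longrightarrow> prob_density M (QS k)"
    and opt: "\<And>k. k \<in> {1..n} \<Longrightarrow> optimal_predictor M L y (QS k) (\<theta>S k)"
    and lam_nonneg: "\<And>i. i \<in> {1..n} \<Longrightarrow> 0 \<le> lam i"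
    and lam_sum: "(\<Sum>i\<in>{1..n}. lam i) = 1"
    and QT_def: "\<And>x. QT x = (\<Sum>i\<in>{1..n}. lam i * QS i x)"
    and \<theta>T_def: "\<And>x. QT x > 0 \<Longrightarrow>
        \<theta>T x = (\<Sum>k\<in>{1..n}. (lam k * QS k x / (\<Sum>j\<in>{1..n}. lam j * QS j x)) *\<^sub>R \<theta>S k x)"
    and fin_S: "\<And>j k. j \<in> {1..n} \<Longrightarrow> k \<in> {1..n} \<Longrightarrow> finite_loss M L y (QS k) (\<theta>S j)"
    and fin_T: "finite_loss M L y QT \<theta>T"
  shows "exp_loss M L y QT \<theta>T \<le> Min ((\<lambda>j. exp_loss M L y QT (\<theta>S j)) ` {1..n})
    \<and> (\<forall>\<alpha>. \<alpha> \<in> {1..n}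
          \<and> (\<forall>j\<in>{1..n}. exp_loss M L y QT (\<theta>S \<alpha>) \<le> exp_loss M L y QT (\<theta>S j))
          \<and> (\<forall>i\<in>{1..n}. 0 < lam i)
          \<and> (\<exists>i\<in>{1..n}. exp_loss M L y (QS i) (\<theta>S i) < exp_loss M L y (QS i) (\<theta>S \<alpha>))
        \<longrightarrow> exp_loss M L y QT \<theta>T < Min ((\<lambda>j. exp_loss M L y QT (\<theta>S j)) ` {1..n}))"
proof -
  have nonempty: "{1..n} \<noteq> {}" using lam_sum by (cases n) auto
  have QT_eq: "QT = (\<lambda>x. \<Sum>i\<in>{1..n}. lam i * QS i x)" using QT_def by blast
  have nonneg: "0 \<le> lam i * QS i x" if "i \<in> {1..n}" "x \<in> space M" for i x
    using dens[OF that(1)] lam_nonneg[OF that(1)] that(2) unfolding prob_density_def by simp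
  have target_le: "exp_loss M L y QT \<theta>T \<le> (\<Sum>k\<in>{1..n}. lam k * exp_loss M L y (QS k) (\<theta>S k))"
    using fin_S by (intro exp_loss_mixture_predictor_le[OF convex _ nonneg QT_def \<theta>T_def _ fin_T]) auto
  have "(\<Sum>k\<in>{1..n}. lam k * exp_loss M L y (QS k) (\<theta>S k)) \<le> exp_loss M L y QT (\<theta>S j)"
    if "j \<in> {1..n}" for j
    unfolding QT_eq by (rule sum_optimal_loss_le_mixture_loss) (use lam_nonneg opt fin_S that in auto)
  then have "exp_loss M L y QT \<theta>T \<le> exp_loss M L y QT (\<theta>S j)" if "j \<in> {1..n}" for j
    using target_le that by fastforce
  then have "exp_loss M L y QT \<theta>T \<le> Min ((\<lambda>j. exp_loss M L y QT (\<theta>S j)) ` {1..n})"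
    using nonempty by (subst Min_ge_iff) auto
  moreover have "exp_loss M L y QT \<theta>T < Min ((\<lambda>j. exp_loss M L y QT (\<theta>S j)) ` {1..n})"
    if \<alpha>: "\<alpha> \<in> {1..n}" and min: "\<forall>j\<in>{1..n}. exp_loss M L y QT (\<theta>S \<alpha>) \<le> exp_loss M L y QT (\<theta>S j)"
      and pos: "\<forall>i\<in>{1..n}. 0 < lam i"
      and strict: "\<exists>i\<in>{1..n}. exp_loss M L y (QS i) (\<theta>S i) < exp_loss M L y (QS i) (\<theta>S \<alpha>)" for \<alpha>
  proof -
    have "Min ((\<lambda>j. exp_loss M L y QT (\<theta>S j)) ` {1..n}) = exp_loss M L y QT (\<theta>S \<alpha>)"
      using \<alpha> min by (intro Min_eqI) auto
    moreover have "(\<Sum>k\<in>{1..n}. lam k * exp_loss M L y (QS k) (\<theta>S k)) < exp_loss M L y QT (\<theta>S \<alpha>)"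
      unfolding QT_eq
      by (rule sum_optimal_loss_less_mixture_loss) (use pos opt fin_S \<alpha> strict in auto)
    ultimately show ?thesis using target_le by simp
  qed
  ultimately show ?thesis by blast
qed

end
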